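(* Let $G$ be a group that is abelian or locally finite, $H$ a group, and $\phi,\psi\in\mathrm{Hom}(H,G)$. Then $\phi^*\circ\tau\neq\psi^*\circ\tau$ for every non-constant $\tau\in\mathrm{CA}(A^G)$ if and only if $\Delta(\phi,\psi)$ is infinite.
   Context: $A$ is a finite set with $|A|\ge 2$. $A^G$ is the set of functions $G\to A$ with shift action $(g\cdot x)(k):=x(g^{-1}k)$. $\mathrm{CA}(A^G)$ is the set of maps $\tau:A^G\to A^G$ for which there exist finite $T\subseteq G$ and $\mu:A^T\to A$ with $\tau(x)(g)=\mu((g^{-1}\cdot x)|_T)$ for all $x,g$. $\phi^*:A^G\to A^H$, $\phi^*(x):=x\circ\phi$. $\Delta(\phi,\psi):=\{\psi(h)^{-1}\phi(h):h\in H\}$. A group is locally finite if every finitely generated subgroup is finite. *)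

theory Defs
  imports "HOL-Algebra.Algebra" "HOL-Library.FuncSet"
begin

definition configs :: "('g, 'm) monoid_scheme \<Rightarrow> 'a set \<Rightarrow> ('g \<Rightarrow> 'a) set" where
  "configs G A = (carrier G \<rightarrow>\<^sub>E A)"

definition shift :: "('g, 'm) monoid_scheme \<Rightarrow> 'g \<Rightarrow> ('g \<Rightarrow> 'a) \<Rightarrow> ('g \<Rightarrow> 'a)" where
  "shift G g x = (\<lambda>k\<in>carrier G. x (inv\<^bsub>G\<^esub> g \<otimes>\<^bsub>G\<^esub> k))"

definition is_CA :: "('g, 'm) monoid_scheme \<Rightarrow> 'a set \<Rightarrow> (('g \<Rightarrow> 'a) \<Rightarrow> ('g \<Rightarrow> 'a)) \<Rightarrow> bool" where
  "is_CA G A \<tau> \<longleftrightarrow> \<tau> \<in> configs G A \<rightarrow> configs G A \<and>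
     (\<exists>T \<mu>. finite T \<and> T \<subseteq> carrier G \<and> \<mu> \<in> (T \<rightarrow>\<^sub>E A) \<rightarrow> A \<and>
       (\<forall>x\<in>configs G A. \<forall>g\<in>carrier G.
          \<tau> x g = \<mu> (restrict (shift G (inv\<^bsub>G\<^esub> g) x) T)))"

definition pullback :: "('h, 'n) monoid_scheme \<Rightarrow> ('h \<Rightarrow> 'g) \<Rightarrow> ('g \<Rightarrow> 'a) \<Rightarrow> ('h \<Rightarrow> 'a)" where
  "pullback H \<phi> x = (\<lambda>h\<in>carrier H. x (\<phi> h))"

definition Delta :: "('g, 'm) monoid_scheme \<Rightarrow> ('h, 'n) monoid_scheme \<Rightarrow> ('h \<Rightarrow> 'g) \<Rightarrow> ('h \<Rightarrow> 'g) \<Rightarrow> 'g set" where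
  "Delta G H \<phi> \<psi> = {inv\<^bsub>G\<^esub> (\<psi> h) \<otimes>\<^bsub>G\<^esub> \<phi> h | h. h \<in> carrier H}"

definition locally_finite_group :: "('g, 'm) monoid_scheme \<Rightarrow> bool" where
  "locally_finite_group G \<longleftrightarrow> (\<forall>S. S \<subseteq> carrier G \<and> finite S \<longrightarrow> finite (generate G S))"

end

theory Submission
  imports Defs
begin

text \<open>
  If \<open>\<Delta>(\<phi>,\<psi>)\<close> is infinite, then for the memory set \<open>T\<close> of a cellular automaton \<open>\<tau>\<close> some
  \<open>h \<in> H\<close> has \<open>\<phi>(h)T\<close> and \<open>\<psi>(h)T\<close> disjoint; so the two cells \<open>\<phi>(h)\<close> and \<open>\<psi>(h)\<close> see independent
  patterns, and \<open>\<phi>\<^sup>* \<circ> \<tau> = \<psi>\<^sup>* \<circ> \<tau>\<close> forces the local rule, hence \<open>\<tau>\<close>, to be constant.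
  If \<open>\<Delta>(\<phi>,\<psi>)\<close> is finite, abelianness or local finiteness puts it inside a finite subgroup \<open>K\<close>.
  The automaton testing whether a configuration is constant on the coset \<open>gK\<close> is non-constant
  and takes equal values at \<open>\<phi>(h) \<in> \<psi>(h)K\<close> and \<open>\<psi>(h)\<close>.
\<close>

lemma shift_inv_apply:
  assumes "group G" "g \<in> carrier G" "k \<in> carrier G"
  shows "shift G (inv\<^bsub>G\<^esub> g) x k = x (g \<otimes>\<^bsub>G\<^esub> k)"
  using assms by (simp add: shift_def group.inv_inv)

lemma shift_inv_window_in_PiE:
  assumes "group G" "x \<in> configs G A" "g \<in> carrier G" "T \<subseteq> carrier G"
  shows "restrict (shift G (inv\<^bsub>G\<^esub> g) x) T \<in> T \<rightarrow>\<^sub>E A"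
  using assms by (auto simp: shift_inv_apply[OF assms(1)] configs_def subset_iff
      group.is_monoid monoid.m_closed)

lemma configs_ext:
  assumes "x \<in> configs G A" "y \<in> configs G A" "\<And>g. g \<in> carrier G \<Longrightarrow> x g = y g"
  shows "x = y"
  using assms unfolding configs_def by (rule PiE_ext)

lemma config_with_two_windows:
  fixes G (structure)
  assumes G: "group G" and T: "T \<subseteq> carrier G"
    and uv: "u \<in> carrier G" "v \<in> carrier G"
    and disjoint: "\<forall>s\<in>T. \<forall>t\<in>T. u \<otimes> s \<noteq> v \<otimes> t"
    and pq: "p \<in> T \<rightarrow>\<^sub>E A" "q \<in> T \<rightarrow>\<^sub>E A" and a: "a \<in> A"
  obtains x where "x \<in> configs G A"
    "restrict (shift G (inv u) x) T = p" "restrict (shift G (inv v) x) T = q"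
proof
  interpret group G by fact
  define x where "x = (\<lambda>g\<in>carrier G.
      if inv u \<otimes> g \<in> T then p (inv u \<otimes> g) else if inv v \<otimes> g \<in> T then q (inv v \<otimes> g) else a)"
  show "x \<in> configs G A" using pq a by (auto simp: configs_def x_def)
  have cancel: "inv w \<otimes> (w \<otimes> k) = k" if "w \<in> carrier G" "k \<in> carrier G" for w k
    using that by (simp add: m_assoc[symmetric])
  show "restrict (shift G (inv u) x) T = p"
  proof
    fix k show "restrict (shift G (inv u) x) T k = p k"
      using T uv pq(1) by (cases "k \<in> T") (auto simp: shift_inv_apply[OF G] x_def cancel)
  qed
  show "restrict (shift G (inv v) x) T = q"
  proof
    fix k show "restrict (shift G (inv v) x) T k = q k"
    proof (cases "k \<in> T")
      case True
      then have k: "k \<in> carrier G" using T by auto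
      have "inv u \<otimes> (v \<otimes> k) \<notin> T"
        using disjoint True uv k by (metis cancel inv_closed inv_inv m_closed)
      then show ?thesis using True k uv by (simp add: shift_inv_apply[OF G] x_def cancel)
    next
      case False then show ?thesis using PiE_arb[OF pq(2)] by simp
    qed
  qed
qed

lemma CA_constant_if_equal_at_separated_cells:
  assumes G: "group G" and T: "T \<subseteq> carrier G"
    and local_rule: "\<And>x g. x \<in> configs G A \<Longrightarrow> g \<in> carrier G \<Longrightarrow>
                       \<tau> x g = \<mu> (restrict (shift G (inv\<^bsub>G\<^esub> g) x) T)"
    and maps: "\<tau> \<in> configs G A \<rightarrow> configs G A"
    and uv: "u \<in> carrier G" "v \<in> carrier G"
    and disjoint: "\<forall>s\<in>T. \<forall>t\<in>T. u \<otimes>\<^bsub>G\<^esub> s \<noteq> v \<otimes>\<^bsub>G\<^esub> t"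
    and equal: "\<And>x. x \<in> configs G A \<Longrightarrow> \<tau> x u = \<tau> x v"
    and a: "a \<in> A" and xy: "x \<in> configs G A" "y \<in> configs G A"
  shows "\<tau> x = \<tau> y"
proof -
  have \<mu>_const: "\<mu> p = \<mu> q" if pq: "p \<in> T \<rightarrow>\<^sub>E A" "q \<in> T \<rightarrow>\<^sub>E A" for p q
  proof -
    obtain z where z: "z \<in> configs G A"
      "restrict (shift G (inv\<^bsub>G\<^esub> u) z) T = p" "restrict (shift G (inv\<^bsub>G\<^esub> v) z) T = q"
      using config_with_two_windows[OF G T uv disjoint pq a] .
    have "\<mu> p = \<tau> z u" using local_rule[OF z(1) uv(1)] z(2) by simp
    also have "\<dots> = \<tau> z v" using equal[OF z(1)] .
    also have "\<dots> = \<mu> q" using local_rule[OF z(1) uv(2)] z(3) by simp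
    finally show ?thesis .
  qed
  show ?thesis
  proof (rule configs_ext)
    show "\<tau> x \<in> configs G A" "\<tau> y \<in> configs G A" using maps xy by auto
    fix g assume g: "g \<in> carrier G"
    show "\<tau> x g = \<tau> y g"
      unfolding local_rule[OF xy(1) g] local_rule[OF xy(2) g]
      by (rule \<mu>_const; rule shift_inv_window_in_PiE[OF G _ g T]) (fact xy)+
  qed
qed

lemma Delta_subset_carrier:
  assumes "group G" "\<phi> \<in> hom H G" "\<psi> \<in> hom H G"
  shows "Delta G H \<phi> \<psi> \<subseteq> carrier G"
  using assms by (auto simp: Delta_def hom_def intro!: monoid.m_closed group.is_monoid group.inv_closed)

lemma separated_cells_if_infinite_Delta:
  fixes G (structure)
  assumes G: "group G" and hom: "\<phi> \<in> hom H G" "\<psi> \<in> hom H G"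
    and inf: "infinite (Delta G H \<phi> \<psi>)" and T: "finite T" "T \<subseteq> carrier G"
  obtains h where "h \<in> carrier H" "\<forall>s\<in>T. \<forall>t\<in>T. \<phi> h \<otimes> s \<noteq> \<psi> h \<otimes> t"
proof -
  interpret group G by fact
  define F where "F = (\<lambda>(t, s). t \<otimes> inv s) ` (T \<times> T)"
  have "finite F" using T(1) by (simp add: F_def)
  then have "infinite (Delta G H \<phi> \<psi> - F)" using inf by (rule Diff_infinite_finite)
  then obtain d where d: "d \<in> Delta G H \<phi> \<psi>" "d \<notin> F"
    using infinite_imp_nonempty by blast
  then obtain h where h: "h \<in> carrier H" and dh: "d = inv (\<psi> h) \<otimes> \<phi> h"
    by (auto simp: Delta_def)
  have u: "\<phi> h \<in> carrier G" and v: "\<psi> h \<in> carrier G" using hom h by (auto simp: hom_def)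
  have "\<phi> h \<otimes> s \<noteq> \<psi> h \<otimes> t" if st: "s \<in> T" "t \<in> T" for s t
  proof
    assume eq: "\<phi> h \<otimes> s = \<psi> h \<otimes> t"
    have s: "s \<in> carrier G" and t: "t \<in> carrier G" using st T(2) by auto
    have "d \<otimes> s = inv (\<psi> h) \<otimes> (\<phi> h \<otimes> s)" using u v s by (simp add: dh m_assoc)
    also have "\<dots> = t" using u v t by (simp add: eq inv_solve_left')
    finally have "d = t \<otimes> inv s" using d(1) s t Delta_subset_carrier[OF G hom]
      by (auto simp: inv_solve_right)
    then show False using d(2) st unfolding F_def by force
  qed
  then show ?thesis using h that by blast
qed

lemma pullbacks_differ_if_infinite_Delta:
  assumes G: "group G" and hom: "\<phi> \<in> hom H G" "\<psi> \<in> hom H G"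
    and inf: "infinite (Delta G H \<phi> \<psi>)" and CA: "is_CA G A \<tau>"
    and nonconst: "x \<in> configs G A" "y \<in> configs G A" "\<tau> x \<noteq> \<tau> y"
  shows "\<exists>z\<in>configs G A. pullback H \<phi> (\<tau> z) \<noteq> pullback H \<psi> (\<tau> z)"
proof (rule ccontr)
  assume "\<not> ?thesis"
  then have equal: "pullback H \<phi> (\<tau> z) = pullback H \<psi> (\<tau> z)" if "z \<in> configs G A" for z
    using that by blast
  from CA obtain T \<mu> where T: "finite T" "T \<subseteq> carrier G"
    and local_rule: "\<And>x g. x \<in> configs G A \<Longrightarrow> g \<in> carrier G \<Longrightarrow>
                       \<tau> x g = \<mu> (restrict (shift G (inv\<^bsub>G\<^esub> g) x) T)"
    and maps: "\<tau> \<in> configs G A \<rightarrow> configs G A"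
    unfolding is_CA_def by blast
  obtain h where h: "h \<in> carrier H" and disjoint: "\<forall>s\<in>T. \<forall>t\<in>T. \<phi> h \<otimes>\<^bsub>G\<^esub> s \<noteq> \<psi> h \<otimes>\<^bsub>G\<^esub> t"
    using separated_cells_if_infinite_Delta[OF G hom inf T] .
  have uv: "\<phi> h \<in> carrier G" "\<psi> h \<in> carrier G" using hom h by (auto simp: hom_def)
  have equal_at_h: "\<tau> z (\<phi> h) = \<tau> z (\<psi> h)" if "z \<in> configs G A" for z
    using fun_cong[OF equal[OF that], of h] h by (simp add: pullback_def)
  have a: "x \<one>\<^bsub>G\<^esub> \<in> A"
    using nonconst(1) G by (auto simp: configs_def group.is_monoid monoid.one_closed)
  have "\<tau> x = \<tau> y"
    by (rule CA_constant_if_equal_at_separated_cells[OF G T(2) _ maps uv disjoint])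
      (fact local_rule equal_at_h a nonconst)+
  then show False using nonconst(3) by contradiction
qed

lemma Delta_eq_image: "Delta G H \<phi> \<psi> = (\<lambda>h. inv\<^bsub>G\<^esub> (\<psi> h) \<otimes>\<^bsub>G\<^esub> \<phi> h) ` carrier H"
  by (auto simp: Delta_def)

lemma subgroup_Delta:
  assumes G: "comm_group G" and H: "group H" and hom: "\<phi> \<in> hom H G" "\<psi> \<in> hom H G"
  shows "subgroup (Delta G H \<phi> \<psi>) G"
proof -
  interpret G: comm_group G by fact
  define f where "f = (\<lambda>h. inv\<^bsub>G\<^esub> (\<psi> h) \<otimes>\<^bsub>G\<^esub> \<phi> h)"
  have closed: "\<phi> h \<in> carrier G" "\<psi> h \<in> carrier G" if "h \<in> carrier H" for h
    using hom that by (auto simp: hom_def)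
  have "f \<in> hom H G"
  proof (rule homI)
    fix x y assume xy: "x \<in> carrier H" "y \<in> carrier H"
    then show "f (x \<otimes>\<^bsub>H\<^esub> y) = f x \<otimes>\<^bsub>G\<^esub> f y"
      using closed[OF xy(1)] closed[OF xy(2)] hom
      by (simp add: f_def hom_mult G.inv_mult G.m_ac)
  qed (simp add: f_def closed)
  then interpret f: group_hom H G f
    using H G.is_group by (simp add: group_hom_def group_hom_axioms_def)
  show ?thesis using f.img_is_subgroup by (simp add: Delta_eq_image f_def)
qed

lemma finite_subgroup_containing_Delta:
  assumes G: "group G" and H: "group H" and hom: "\<phi> \<in> hom H G" "\<psi> \<in> hom H G"
    and abelian_or_lf: "comm_group G \<or> locally_finite_group G"
    and fin: "finite (Delta G H \<phi> \<psi>)"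
  obtains K where "subgroup K G" "finite K" "Delta G H \<phi> \<psi> \<subseteq> K"
proof (cases "comm_group G")
  case True
  then show ?thesis using subgroup_Delta[OF True H hom] fin that by blast
next
  case False
  let ?K = "generate G (Delta G H \<phi> \<psi>)"
  have sub: "Delta G H \<phi> \<psi> \<subseteq> carrier G" using Delta_subset_carrier[OF G hom] .
  show ?thesis
  proof (rule that)
    show "subgroup ?K G" using group.generate_is_subgroup[OF G sub] .
    show "finite ?K" using False abelian_or_lf fin sub unfolding locally_finite_group_def by blast
    show "Delta G H \<phi> \<psi> \<subseteq> ?K" by (auto intro: generate.incl)
  qed
qed

definition coset_CA :: "('g, 'm) monoid_scheme \<Rightarrow> 'g set \<Rightarrow> 'a \<Rightarrow> 'a \<Rightarrow> ('g \<Rightarrow> 'a) \<Rightarrow> ('g \<Rightarrow> 'a)"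
  where "coset_CA G K a b x = (\<lambda>g\<in>carrier G. if \<forall>k\<in>g <#\<^bsub>G\<^esub> K. x k = a then a else b)"

lemma is_CA_coset_CA:
  assumes G: "group G" and K: "subgroup K G" "finite K" and ab: "a \<in> A" "b \<in> A"
  shows "is_CA G A (coset_CA G K a b)"
  unfolding is_CA_def
proof (intro conjI exI[of _ K] exI[of _ "\<lambda>p. if \<forall>k\<in>K. p k = a then a else b"] ballI)
  show "coset_CA G K a b \<in> configs G A \<rightarrow> configs G A"
    using ab by (auto simp: configs_def coset_CA_def)
  show "(\<lambda>p. if \<forall>k\<in>K. p k = a then a else b) \<in> (K \<rightarrow>\<^sub>E A) \<rightarrow> A" using ab by auto
  show "K \<subseteq> carrier G" using K(1) by (rule subgroup.subset)
  fix x g assume "g \<in> carrier G"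
  then show "coset_CA G K a b x g =
      (if \<forall>k\<in>K. restrict (shift G (inv\<^bsub>G\<^esub> g) x) K k = a then a else b)"
    using subgroup.mem_carrier[OF K(1)]
    by (auto simp: coset_CA_def l_coset_def shift_inv_apply[OF G])
qed (fact K(2))

lemma coset_CA_not_constant:
  fixes G (structure)
  assumes G: "group G" and K: "subgroup K G" and ab: "a \<noteq> b"
  shows "coset_CA G K a b (\<lambda>g\<in>carrier G. a) \<noteq> coset_CA G K a b (\<lambda>g\<in>carrier G. b)"
proof -
  interpret group G by fact
  have "\<one> <# K = K" "\<one> \<in> K" "K \<subseteq> carrier G"
    using K by (auto simp: lcos_mult_one subgroup.one_closed subgroup.subset)
  then have "coset_CA G K a b (\<lambda>g\<in>carrier G. c) \<one> = (if c = a then a else b)" for c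
    by (auto simp: coset_CA_def)
  then show ?thesis using ab by metis
qed

lemma coset_CA_mult_right:
  fixes G (structure)
  assumes G: "group G" and K: "subgroup K G"
    and g: "g \<in> carrier G" and d: "d \<in> K"
  shows "coset_CA G K a b x (g \<otimes> d) = coset_CA G K a b x g"
proof -
  interpret group G by fact
  have "d \<in> carrier G" using K d by (auto dest: subgroup.subset)
  then have "(g \<otimes> d) <# K = g <# K"
    using K g d by (metis coset_join3 lcos_m_assoc subgroup.subset)
  then show ?thesis using g \<open>d \<in> carrier G\<close> by (simp add: coset_CA_def)
qed

lemma pullbacks_coset_CA_eq:
  fixes G (structure)
  assumes G: "group G" and hom: "\<phi> \<in> hom H G" "\<psi> \<in> hom H G"
    and K: "subgroup K G" "Delta G H \<phi> \<psi> \<subseteq> K"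
  shows "pullback H \<phi> (coset_CA G K a b x) = pullback H \<psi> (coset_CA G K a b x)"
proof -
  interpret group G by fact
  have "coset_CA G K a b x (\<phi> h) = coset_CA G K a b x (\<psi> h)" if h: "h \<in> carrier H" for h
  proof -
    have u: "\<phi> h \<in> carrier G" and v: "\<psi> h \<in> carrier G" using hom h by (auto simp: hom_def)
    have "\<phi> h = \<psi> h \<otimes> (inv (\<psi> h) \<otimes> \<phi> h)" using u v by (simp add: m_assoc[symmetric])
    moreover have "inv (\<psi> h) \<otimes> \<phi> h \<in> K" using K(2) h by (auto simp: Delta_def)
    ultimately show ?thesis using coset_CA_mult_right[OF G K(1) v] by metis
  qed
  then show ?thesis by (auto simp: pullback_def)
qed

theorem proposition3p14:
  fixes G :: "('g, 'm) monoid_scheme" and H :: "('h, 'n) monoid_scheme"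
    and A :: "'a set" and \<phi> \<psi> :: "'h \<Rightarrow> 'g"
  assumes "group G" and "group H"
    and "comm_group G \<or> locally_finite_group G"
    and "\<phi> \<in> hom H G" and "\<psi> \<in> hom H G"
    and "finite A" and "card A \<ge> 2"
  shows "(\<forall>\<tau>. is_CA G A \<tau> \<and> (\<exists>x\<in>configs G A. \<exists>y\<in>configs G A. \<tau> x \<noteq> \<tau> y) \<longrightarrow>
            (\<exists>x\<in>configs G A. pullback H \<phi> (\<tau> x) \<noteq> pullback H \<psi> (\<tau> x)))
         \<longleftrightarrow> infinite (Delta G H \<phi> \<psi>)"
proof
  assume separates: "\<forall>\<tau>. is_CA G A \<tau> \<and> (\<exists>x\<in>configs G A. \<exists>y\<in>configs G A. \<tau> x \<noteq> \<tau> y) \<longrightarrow>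
            (\<exists>x\<in>configs G A. pullback H \<phi> (\<tau> x) \<noteq> pullback H \<psi> (\<tau> x))"
  show "infinite (Delta G H \<phi> \<psi>)"
  proof
    assume "finite (Delta G H \<phi> \<psi>)"
    then obtain K where K: "subgroup K G" "finite K" "Delta G H \<phi> \<psi> \<subseteq> K"
      using finite_subgroup_containing_Delta assms(1-5) by metis
    obtain a b where ab: "a \<in> A" "b \<in> A" "a \<noteq> b"
      using assms(7) by (metis One_nat_def Suc_1 card_le_Suc_iff insert_iff)
    define \<tau> where "\<tau> = coset_CA G K a b"
    have "is_CA G A \<tau>" using is_CA_coset_CA[OF assms(1) K(1,2) ab(1,2)] by (simp add: \<tau>_def)
    moreover have "(\<lambda>g\<in>carrier G. a) \<in> configs G A" "(\<lambda>g\<in>carrier G. b) \<in> configs G A"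
      using ab by (auto simp: configs_def)
    moreover have "\<tau> (\<lambda>g\<in>carrier G. a) \<noteq> \<tau> (\<lambda>g\<in>carrier G. b)"
      using coset_CA_not_constant[OF assms(1) K(1) ab(3)] by (simp add: \<tau>_def)
    moreover have "pullback H \<phi> (\<tau> x) = pullback H \<psi> (\<tau> x)" for x
      using pullbacks_coset_CA_eq[OF assms(1,4,5) K(1,3)] by (simp add: \<tau>_def)
    ultimately show False using separates by blast
  qed
next
  assume "infinite (Delta G H \<phi> \<psi>)"
  then show "\<forall>\<tau>. is_CA G A \<tau> \<and> (\<exists>x\<in>configs G A. \<exists>y\<in>configs G A. \<tau> x \<noteq> \<tau> y) \<longrightarrow>
            (\<exists>x\<in>configs G A. pullback H \<phi> (\<tau> x) \<noteq> pullback H \<psi> (\<tau> x))"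
    using pullbacks_differ_if_infinite_Delta[OF assms(1,4,5)] by blast
qed

end
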